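(* Let $\lambda,\sigma_1,\sigma_2\in\mathbb{C}^*$ and $\eta_1,\eta_2\in\mathbb{C}$. Let $V$ be the subspace of $\Omega(\lambda,\eta_1,\sigma_1,0)\otimes\Omega(\lambda,\eta_2,0,\sigma_2)$ spanned by $\{\sum_{t=0}^{j}\binom{j}{t}X^iY^{j-t}\otimes S^kT^t\mid i,j,k\in\mathbb{N}\}$, which is a proper subspace. Then $V$ is a minimal proper $\mathcal{G}$-submodule of $\Omega(\lambda,\eta_1,\sigma_1,0)\otimes\Omega(\lambda,\eta_2,0,\sigma_2)$ (i.e. $V$ is a nonzero proper submodule containing no nonzero proper submodule).
   Context: The planar Galilean conformal algebra $\mathcal{G}$ is the complex Lie algebra with basis $\{L_m,H_m,I_m,J_m\mid m\in\mathbb{Z}\}$ and brackets $[L_m,L_n]=(n-m)L_{m+n}$, $[L_m,H_n]=nH_{m+n}$, $[L_m,I_n]=(n-m)I_{m+n}$, $[L_m,J_n]=(n-m)J_{m+n}$, $[H_m,I_n]=I_{m+n}$, $[H_m,J_n]=-J_{m+n}$, and $[H_m,H_n]=[I_m,I_n]=[J_m,J_n]=[I_m,J_n]=0$ for all $m,n\in\mathbb{Z}$. For $\lambda,\sigma\in\mathbb{C}^*$, $\eta\in\mathbb{C}$, the module $\Omega(\lambda,\eta,\sigma,0)$ is $\mathbb{C}[X,Y]$ with $L_m f(X,Y)=\lambda^m(Y-mX+m\eta)f(X,Y-m)$, $H_m f(X,Y)=\lambda^m X f(X,Y-m)$, $I_m f(X,Y)=\lambda^m\sigma f(X-1,Y-m)$,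 $J_m f(X,Y)=0$. The module $\Omega(\lambda,\eta,0,\sigma)$ is $\mathbb{C}[S,T]$ with $L_m f(S,T)=\lambda^m(T+mS+m\eta)f(S,T-m)$, $H_m f(S,T)=\lambda^m S f(S,T-m)$, $I_m f(S,T)=0$, $J_m f(S,T)=\lambda^m\sigma f(S+1,T-m)$. The tensor product of $\mathcal{G}$-modules has action $x(v\otimes w)=xv\otimes w+v\otimes xw$. $\mathbb{N}$ denotes the non-negative integers. *)

theory Defs
  imports "HOL-Computational_Algebra.Polynomial"
begin

text \<open>The tensor product C[X,Y] (x) C[S,T] is identified with the polynomial ring
C[X,Y,S,T] via X^i Y^j (x) S^k T^l = X^i Y^j S^k T^l.  It is realised as nested
univariate polynomials: innermost variable X, then Y, then S, outermost T.\<close>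

type_synonym P4 = "complex poly poly poly poly"

definition C4 :: "complex \<Rightarrow> P4" where "C4 c = [:[:[:[:c:]:]:]:]"
definition vX :: P4 where "vX = [:[:[:[:0, 1:]:]:]:]"
definition vY :: P4 where "vY = [:[:[:0, 1:]:]:]"
definition vS :: P4 where "vS = [:[:0, 1:]:]"
definition vT :: P4 where "vT = [:0, 1:]"

definition shX :: "P4 \<Rightarrow> P4" where
  "shX F = map_poly (map_poly (map_poly (\<lambda>c. pcompose c [:-1, 1:]))) F"
definition shY :: "int \<Rightarrow> P4 \<Rightarrow> P4" where
  "shY m F = map_poly (map_poly (\<lambda>c. pcompose c [:- of_int m, 1:])) F"
definition shS :: "P4 \<Rightarrow> P4" where
  "shS F = map_poly (\<lambda>c. pcompose c [:1, 1:]) F"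
definition shT :: "int \<Rightarrow> P4 \<Rightarrow> P4" where
  "shT m F = pcompose F [:- of_int m, 1:]"

datatype gbasis = L int | H int | I int | J int

text \<open>Action of the basis elements on
  Omega(lam,eta1,sig1,0) (x) Omega(lam,eta2,0,sig2), i.e. x(v (x) w) = xv (x) w + v (x) xw,
  extended linearly.\<close>
fun act :: "complex \<Rightarrow> complex \<Rightarrow> complex \<Rightarrow> complex \<Rightarrow> complex \<Rightarrow> gbasis \<Rightarrow> P4 \<Rightarrow> P4" where
  "act lam eta1 sig1 eta2 sig2 (L m) F =
     C4 (lam powi m) * ((vY - of_int m * vX + C4 (of_int m * eta1)) * shY m F
                      + (vT + of_int m * vS + C4 (of_int m * eta2)) * shT m F)"
| "act lam eta1 sig1 eta2 sig2 (H m) F =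
     C4 (lam powi m) * (vX * shY m F + vS * shT m F)"
| "act lam eta1 sig1 eta2 sig2 (I m) F =
     C4 (lam powi m * sig1) * shX (shY m F)"
| "act lam eta1 sig1 eta2 sig2 (J m) F =
     C4 (lam powi m * sig2) * shS (shT m F)"

definition is_subspace :: "P4 set \<Rightarrow> bool" where
  "is_subspace W \<longleftrightarrow> 0 \<in> W \<and> (\<forall>u\<in>W. \<forall>v\<in>W. u + v \<in> W) \<and> (\<forall>c. \<forall>u\<in>W. C4 c * u \<in> W)"

definition is_submodule ::
  "complex \<Rightarrow> complex \<Rightarrow> complex \<Rightarrow> complex \<Rightarrow> complex \<Rightarrow> P4 set \<Rightarrow> bool" where
  "is_submodule lam eta1 sig1 eta2 sig2 W \<longleftrightarrow>
     is_subspace W \<and> (\<forall>x. \<forall>u\<in>W. act lam eta1 sig1 eta2 sig2 x u \<in> W)"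

definition gen :: "nat \<Rightarrow> nat \<Rightarrow> nat \<Rightarrow> P4" where
  "gen i j k = (\<Sum>t = 0..j. of_nat (j choose t) * vX ^ i * vY ^ (j - t) * vS ^ k * vT ^ t)"

definition Vsub :: "P4 set" where
  "Vsub = is_subspace hull {gen i j k | i j k. True}"

end

theory Submission
  imports Defs
begin

text \<open>The space V consists exactly of the polynomials p(X, S, Y + T).  It is a submodule because
every basis element acts on such a polynomial by shifting X, S or Y + T (on V the shifts of Y and
of T by m agree) and by multiplying with a polynomial in X, S and Y + T.  For minimality, the
operators H_1 / lam - H_0, J_0 / sig2 - 1 and I_0 / sig1 - 1 act on V as (X + S) times a difference
operator in Y + T, and as difference operators in S and in X; each lowers the degree in its
variable, so a nonzero submodule inside V contains a nonzero constant.  From 1, the operators H_0,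
L_0 and L_1 produce every X^i S^k (Y + T)^j, and these span V.\<close>

definition is_semiring_hom :: "('a::semiring_1 \<Rightarrow> 'b::semiring_1) \<Rightarrow> bool" where
  "is_semiring_hom f \<longleftrightarrow>
     f 0 = 0 \<and> f 1 = 1 \<and> (\<forall>a b. f (a + b) = f a + f b) \<and> (\<forall>a b. f (a * b) = f a * f b)"

lemma is_semiring_homD:
  assumes "is_semiring_hom f"
  shows "f 0 = 0" "f 1 = 1" "f (a + b) = f a + f b" "f (a * b) = f a * f b"
  using assms by (simp_all add: is_semiring_hom_def)

lemma is_semiring_hom_map_poly:
  fixes f :: "'a::comm_semiring_1 \<Rightarrow> 'b::comm_semiring_1"
  assumes f: "is_semiring_hom f"
  shows "is_semiring_hom (map_poly f)"
proof -
  have add: "map_poly f (p + q) = map_poly f p + map_poly f q" for p q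
    by (rule poly_eqI) (simp add: coeff_map_poly is_semiring_homD[OF f])
  have "map_poly f (p * q) = map_poly f p * map_poly f q" for p q
  proof (induction p)
    case (pCons a p)
    then show ?case
      using is_semiring_homD[OF f] by (simp add: add map_poly_pCons map_poly_smult)
  qed simp
  with add show ?thesis
    using is_semiring_homD[OF f] by (simp add: is_semiring_hom_def)
qed

lemma is_semiring_hom_pcompose: "is_semiring_hom (\<lambda>p. pcompose p q)"
  unfolding is_semiring_hom_def using pcompose_1[of q] by (simp add: pcompose_add pcompose_mult)

lemma semiring_hom_poly:
  assumes "is_semiring_hom g"
  shows "g (poly p z) = poly (map_poly g p) (g z)"
  by (induction p) (simp_all add: map_poly_pCons is_semiring_homD[OF assms])

lemma is_semiring_hom_poly: "is_semiring_hom (\<lambda>p. poly p x)"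
  by (simp add: is_semiring_hom_def)

lemma poly_map_poly_fixed_point:
  assumes "is_semiring_hom g" "g z = z"
  shows "poly (map_poly g p) z = g (poly p z)"
  using semiring_hom_poly[OF assms(1)] assms(2) by simp

lemma poly_eq_0_if_infinite_roots:
  fixes p :: "'a::idom poly"
  assumes "infinite A" "\<And>a. a \<in> A \<Longrightarrow> poly p a = 0"
  shows "p = 0"
  using assms poly_roots_finite[of p] finite_subset[of A "{x. poly p x = 0}"] by blast

lemma infinite_range_of_nat_const:
  "infinite (range (\<lambda>n::nat. [:of_nat n:] :: 'a::{comm_semiring_1,semiring_char_0} poly))"
  by (rule range_inj_infinite) (simp add: inj_on_def)

lemma degree_0_if_pcompose_shift_eq:
  fixes p :: "'a::{idom,ring_char_0} poly"
  assumes "c \<noteq> 0" and "pcompose p [:c, 1:] = p"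
  shows "degree p = 0"
proof -
  have periodic: "poly p (c + x) = poly p x" for x
    using arg_cong[OF assms(2), of "\<lambda>q. poly q x"] by (simp add: poly_pcompose)
  have "poly p (of_nat n * c) = poly p 0" for n
    by (induction n) (simp_all add: distrib_right periodic)
  moreover have "infinite (range (\<lambda>n::nat. of_nat n * c))"
    using assms(1) by (intro range_inj_infinite injI) simp
  ultimately have "p - [:poly p 0:] = 0"
    by (intro poly_eq_0_if_infinite_roots) auto
  then show ?thesis
    by (metis degree_pCons_0 eq_iff_diff_eq_0)
qed

lemma shift_diff_lowers_degree:
  fixes p :: "'a::{idom,ring_char_0} poly"
  assumes "c \<noteq> 0" and "degree p > 0"
  shows "pcompose p [:c, 1:] - p \<noteq> 0" and "degree (pcompose p [:c, 1:] - p) < degree p"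
proof -
  let ?q = "pcompose p [:c, 1:]"
  show "?q - p \<noteq> 0"
    using degree_0_if_pcompose_shift_eq[OF assms(1)] assms(2) by auto
  have degree: "degree ?q = degree p"
    by (simp add: degree_pcompose)
  have lead_coeff: "lead_coeff ?q = lead_coeff p"
    by (simp add: lead_coeff_comp)
  have "coeff (?q - p) (degree p) = 0"
    using degree lead_coeff by (metis coeff_diff diff_self)
  moreover have "degree (?q - p) \<le> degree p"
    using degree_diff_le_max[of ?q p] degree by simp
  ultimately show "degree (?q - p) < degree p"
    using \<open>?q - p \<noteq> 0\<close>
    by (metis le_neq_implies_less leading_coeff_0_iff)
qed

lemma degree_descent:
  fixes P :: "'a::zero poly \<Rightarrow> bool"
  assumes "P p" and "p \<noteq> 0"
    and step: "\<And>q. P q \<Longrightarrow> q \<noteq> 0 \<Longrightarrow> degree q > 0 \<Longrightarrow>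
      \<exists>q'. P q' \<and> q' \<noteq> 0 \<and> degree q' < degree q"
  shows "\<exists>c. c \<noteq> 0 \<and> P [:c:]"
  using assms(1,2)
proof (induction "degree p" arbitrary: p rule: less_induct)
  case less
  show ?case
  proof (cases "degree p = 0")
    case True
    then show ?thesis
      using less.prems by (metis degree_eq_zeroE pCons_eq_0_iff)
  next
    case False
    then show ?thesis
      using less step[of p] by blast
  qed
qed

lemma poly_map_poly_mem_subring:
  assumes "0 \<in> R" "\<And>u v. u \<in> R \<Longrightarrow> v \<in> R \<Longrightarrow> u + v \<in> R"
    and "\<And>u v. u \<in> R \<Longrightarrow> v \<in> R \<Longrightarrow> u * v \<in> R"
    and "f 0 = 0" "\<And>a. f a \<in> R" "z \<in> R"
  shows "poly (map_poly f p) z \<in> R"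
  by (induction p) (simp_all add: assms map_poly_pCons)

definition eval4 :: "P4 \<Rightarrow> complex \<Rightarrow> complex \<Rightarrow> complex \<Rightarrow> complex \<Rightarrow> complex" where
  "eval4 F x y s t = poly (poly (poly (poly F [:[:[:t:]:]:]) [:[:s:]:]) [:y:]) x"

lemma is_semiring_hom_eval4: "is_semiring_hom (\<lambda>F. eval4 F x y s t)"
  by (simp add: is_semiring_hom_def eval4_def)

lemma eval4_simps [simp]:
  "eval4 (F + G) x y s t = eval4 F x y s t + eval4 G x y s t"
  "eval4 (F - G) x y s t = eval4 F x y s t - eval4 G x y s t"
  "eval4 (F * G) x y s t = eval4 F x y s t * eval4 G x y s t"
  "eval4 (F ^ n) x y s t = eval4 F x y s t ^ n"
  "eval4 0 x y s t = 0"
  "eval4 1 x y s t = 1"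
  "eval4 (of_nat k) x y s t = of_nat k"
  "eval4 (of_int i) x y s t = of_int i"
  "eval4 (C4 c) x y s t = c"
  "eval4 vX x y s t = x"
  "eval4 vY x y s t = y"
  "eval4 vS x y s t = s"
  "eval4 vT x y s t = t"
  by (simp_all add: eval4_def C4_def vX_def vY_def vS_def vT_def poly_power)

lemma eval4_sum [simp]: "eval4 (sum f A) x y s t = (\<Sum>a\<in>A. eval4 (f a) x y s t)"
  by (induction A rule: infinite_finite_induct) auto

lemma eval4_poly:
  "eval4 (poly P Z) x y s t = poly (map_poly (\<lambda>F. eval4 F x y s t) P) (eval4 Z x y s t)"
  by (rule semiring_hom_poly[OF is_semiring_hom_eval4])

lemmas shift_semiring_homs = is_semiring_hom_pcompose is_semiring_hom_map_poly[OF is_semiring_hom_pcompose]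
  is_semiring_hom_map_poly[OF is_semiring_hom_map_poly[OF is_semiring_hom_pcompose]]

lemma eval4_shX [simp]: "eval4 (shX F) x y s t = eval4 F (x - 1) y s t"
  by (simp add: eval4_def shX_def poly_pcompose
    poly_map_poly_fixed_point shift_semiring_homs map_poly_pCons)

lemma eval4_shY [simp]: "eval4 (shY m F) x y s t = eval4 F x (y - of_int m) s t"
  by (simp add: eval4_def shY_def poly_pcompose
    poly_map_poly_fixed_point shift_semiring_homs map_poly_pCons of_int_poly)

lemma eval4_shS [simp]: "eval4 (shS F) x y s t = eval4 F x y (s + 1) t"
  by (simp add: eval4_def shS_def poly_pcompose
    poly_map_poly_fixed_point shift_semiring_homs one_pCons add.commute)

lemma eval4_shT [simp]: "eval4 (shT m F) x y s t = eval4 F x y s (t - of_int m)"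
  by (simp add: eval4_def shT_def poly_pcompose of_int_poly)

lemma eval4_eqI:
  assumes "\<And>x y s t. eval4 F x y s t = eval4 G x y s t"
  shows "F = G"
proof -
  have "poly (poly (poly (F - G) [:[:[:t:]:]:]) [:[:s:]:]) [:y:] = 0" for t s y
    using assms by (simp add: eval4_def poly_all_0_iff_0[symmetric])
  then have "poly (poly (F - G) [:[:[:t:]:]:]) [:[:s:]:] = 0" for t s
    by (intro poly_eq_0_if_infinite_roots[OF infinite_range_of_nat_const]) (auto simp: of_nat_poly)
  then have "poly (F - G) [:[:[:t:]:]:] = 0" for t
    by (intro poly_eq_0_if_infinite_roots[OF infinite_range_of_nat_const]) (auto simp: of_nat_poly)
  then have "F - G = 0"
    by (intro poly_eq_0_if_infinite_roots[OF infinite_range_of_nat_const]) (auto simp: of_nat_poly)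
  then show ?thesis by simp
qed

text \<open>R3 holds polynomials in X (innermost), S and U (outermost); emb below sends p to
p(X, S, Y + T).\<close>

type_synonym R3 = "complex poly poly poly"

definition eval3 :: "R3 \<Rightarrow> complex \<Rightarrow> complex \<Rightarrow> complex \<Rightarrow> complex" where
  "eval3 p x s u = poly (poly (poly p [:[:u:]:]) [:s:]) x"

definition C3 :: "complex \<Rightarrow> R3" where "C3 c = [:[:[:c:]:]:]"
definition X3 :: R3 where "X3 = [:[:[:0, 1:]:]:]"
definition S3 :: R3 where "S3 = [:[:0, 1:]:]"
definition U3 :: R3 where "U3 = [:0, 1:]"

definition shU3 :: "complex \<Rightarrow> R3 \<Rightarrow> R3" where "shU3 a p = pcompose p [:[:[:a:]:], 1:]"
definition shS3 :: "R3 \<Rightarrow> R3" where "shS3 p = map_poly (\<lambda>c. pcompose c [:1, 1:]) p"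
definition shX3 :: "R3 \<Rightarrow> R3" where "shX3 p = map_poly (map_poly (\<lambda>c. pcompose c [:-1, 1:])) p"

lemma eval3_simps [simp]:
  "eval3 (p + q) x s u = eval3 p x s u + eval3 q x s u"
  "eval3 (p - q) x s u = eval3 p x s u - eval3 q x s u"
  "eval3 (p * q) x s u = eval3 p x s u * eval3 q x s u"
  "eval3 (p ^ n) x s u = eval3 p x s u ^ n"
  "eval3 (C3 c) x s u = c"
  "eval3 X3 x s u = x"
  "eval3 S3 x s u = s"
  "eval3 U3 x s u = u"
  by (simp_all add: eval3_def C3_def X3_def S3_def U3_def poly_power)

lemma eval3_shU3 [simp]: "eval3 (shU3 a p) x s u = eval3 p x s (u + a)"
  by (simp add: eval3_def shU3_def poly_pcompose add.commute)

lemma eval3_shS3 [simp]: "eval3 (shS3 p) x s u = eval3 p x (s + 1) u"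
  by (simp add: eval3_def shS3_def poly_pcompose
    poly_map_poly_fixed_point shift_semiring_homs one_pCons add.commute)

lemma eval3_shX3 [simp]: "eval3 (shX3 p) x s u = eval3 p (x - 1) s u"
  by (simp add: eval3_def shX3_def poly_pcompose
    poly_map_poly_fixed_point shift_semiring_homs map_poly_pCons)

definition emb1 :: "complex poly \<Rightarrow> P4" where "emb1 r = poly (map_poly C4 r) vX"
definition emb2 :: "complex poly poly \<Rightarrow> P4" where "emb2 q = poly (map_poly emb1 q) vS"
definition emb :: "R3 \<Rightarrow> P4" where "emb p = poly (map_poly emb2 p) (vY + vT)"

lemma C4_0 [simp]: "C4 0 = 0"
  by (simp add: C4_def)

lemma emb_0 [simp]: "emb1 0 = 0" "emb2 0 = 0" "emb 0 = 0"
  by (simp_all add: emb1_def emb2_def emb_def)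

lemma eval4_emb [simp]: "eval4 (emb p) x y s t = eval3 p x s (y + t)"
proof -
  have emb1: "eval4 (emb1 r) x y s t = poly r x" for r
    by (simp add: emb1_def eval4_poly map_poly_map_poly o_def)
  have emb2: "eval4 (emb2 q) x y s t = poly (poly q [:s:]) x" for q
    using semiring_hom_poly[OF is_semiring_hom_poly[where x = x], of q "[:s:]"]
    by (simp add: emb2_def eval4_poly map_poly_map_poly o_def emb1)
  show ?thesis
    using semiring_hom_poly[of "\<lambda>q. poly (poly q [:s:]) x" p "[:[:y + t:]:]"]
    by (simp add: emb_def eval3_def eval4_poly map_poly_map_poly o_def emb2 is_semiring_hom_def)
qed

lemma is_subspace_zero: "is_subspace W \<Longrightarrow> 0 \<in> W"
  by (simp add: is_subspace_def)

lemma is_subspace_add: "is_subspace W \<Longrightarrow> u \<in> W \<Longrightarrow> v \<in> W \<Longrightarrow> u + v \<in> W"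
  by (simp add: is_subspace_def)

lemma is_subspace_smult: "is_subspace W \<Longrightarrow> u \<in> W \<Longrightarrow> C4 c * u \<in> W"
  by (simp add: is_subspace_def)

lemma is_subspace_diff:
  assumes "is_subspace W" "u \<in> W" "v \<in> W"
  shows "u - v \<in> W"
proof -
  have "u - v = u + C4 (-1) * v"
    by (rule eval4_eqI) simp
  then show ?thesis
    using assms is_subspace_add is_subspace_smult by metis
qed

lemma is_submodule_subspace: "is_submodule lam eta1 sig1 eta2 sig2 W \<Longrightarrow> is_subspace W"
  by (simp add: is_submodule_def)

lemma is_submodule_act:
  "is_submodule lam eta1 sig1 eta2 sig2 W \<Longrightarrow> u \<in> W \<Longrightarrow> act lam eta1 sig1 eta2 sig2 g u \<in> W"
  by (simp add: is_submodule_def)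

lemma gen_eq: "gen i j k = vX ^ i * vS ^ k * (vY + vT) ^ j"
proof (rule eval4_eqI)
  fix x y s t :: complex
  have "(y + t) ^ j = (\<Sum>n\<le>j. of_nat (j choose n) * t ^ n * y ^ (j - n))"
    using binomial_ring[of t y j] by (simp add: add.commute)
  then show "eval4 (gen i j k) x y s t = eval4 (vX ^ i * vS ^ k * (vY + vT) ^ j) x y s t"
    by (simp add: gen_def sum_distrib_left atLeast0AtMost mult_ac)
qed

lemma gen_mult: "gen i j k * gen i' j' k' = gen (i + i') (j + j') (k + k')"
  by (simp add: gen_eq power_add mult_ac)

lemma is_subspace_Vsub: "is_subspace Vsub"
  unfolding Vsub_def by (rule hull_in) (unfold is_subspace_def, blast)

lemma gen_mem_Vsub: "gen i j k \<in> Vsub"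
  unfolding Vsub_def by (rule hull_inc) blast

lemma Vsub_minimal: "(\<And>i j k. gen i j k \<in> W) \<Longrightarrow> is_subspace W \<Longrightarrow> Vsub \<subseteq> W"
  unfolding Vsub_def by (rule hull_minimal) blast+

lemma mult_mem_Vsub:
  assumes "F \<in> Vsub" "G \<in> Vsub"
  shows "F * G \<in> Vsub"
proof -
  have preimage: "Vsub \<subseteq> {F. M * F \<in> Vsub}" if "\<And>i j k. M * gen i j k \<in> Vsub" for M
    using that is_subspace_Vsub
    by (intro Vsub_minimal) (simp_all add: is_subspace_def distrib_left mult.left_commute[of M])
  have "gen i j k * G \<in> Vsub" for i j k
    using preimage[of "gen i j k"] assms(2) by (auto simp: gen_mult gen_mem_Vsub)
  then show ?thesis
    using preimage[of G] assms(1) by (auto simp: mult.commute)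
qed

lemma emb_mem_Vsub: "emb p \<in> Vsub"
proof -
  note in_subring = poly_map_poly_mem_subring[OF is_subspace_zero[OF is_subspace_Vsub]
      is_subspace_add[OF is_subspace_Vsub] mult_mem_Vsub]
  have "C4 c \<in> Vsub" for c
    using is_subspace_smult[OF is_subspace_Vsub gen_mem_Vsub, of c 0 0 0] by (simp add: gen_eq)
  then have "emb1 r \<in> Vsub" for r
    using gen_mem_Vsub[of 1 0 0] unfolding emb1_def by (intro in_subring) (simp_all add: gen_eq)
  then have "emb2 q \<in> Vsub" for q
    using gen_mem_Vsub[of 0 0 1] unfolding emb2_def by (intro in_subring) (simp_all add: gen_eq)
  then show ?thesis
    using gen_mem_Vsub[of 0 1 0] unfolding emb_def by (intro in_subring) (simp_all add: gen_eq)
qed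

lemma Vsub_eq_range_emb: "Vsub = range emb"
proof
  show "range emb \<subseteq> Vsub"
    using emb_mem_Vsub by blast
  have gen_emb: "gen i j k = emb (X3 ^ i * S3 ^ k * U3 ^ j)" for i j k
    by (rule eval4_eqI) (simp add: gen_eq)
  have "is_subspace (range emb)"
    unfolding is_subspace_def
  proof (intro conjI ballI allI)
    show "0 \<in> range emb"
      by (metis emb_0(3) rangeI)
    fix u v assume "u \<in> range emb" "v \<in> range emb"
    then obtain p q where "u = emb p" "v = emb q" by blast
    then have "u + v = emb (p + q)" by (intro eval4_eqI) simp
    then show "u + v \<in> range emb" by blast
  next
    fix c u assume "u \<in> range emb"
    then obtain p where "u = emb p" by blast
    then have "C4 c * u = emb (C3 c * p)" by (intro eval4_eqI) simp
    then show "C4 c * u \<in> range emb" by blast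
  qed
  then show "Vsub \<subseteq> range emb"
    using gen_emb by (intro Vsub_minimal) auto
qed

lemma act_emb_mem_range_emb: "act lam eta1 sig1 eta2 sig2 g (emb p) \<in> range emb"
proof (cases g)
  case (L m)
  have "act lam eta1 sig1 eta2 sig2 g (emb p) = emb (C3 (lam powi m) *
      (U3 + C3 (of_int m) * (S3 - X3) + C3 (of_int m * (eta1 + eta2))) * shU3 (- of_int m) p)"
    by (rule eval4_eqI) (simp add: L algebra_simps)
  then show ?thesis by simp
next
  case (H m)
  have "act lam eta1 sig1 eta2 sig2 g (emb p) = emb (C3 (lam powi m) * (X3 + S3) * shU3 (- of_int m) p)"
    by (rule eval4_eqI) (simp add: H algebra_simps)
  then show ?thesis by simp
next
  case (I m)
  have "act lam eta1 sig1 eta2 sig2 g (emb p) = emb (C3 (lam powi m * sig1) * shX3 (shU3 (- of_int m) p))"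
    by (rule eval4_eqI) (simp add: I algebra_simps)
  then show ?thesis by simp
next
  case (J m)
  have "act lam eta1 sig1 eta2 sig2 g (emb p) = emb (C3 (lam powi m * sig2) * shS3 (shU3 (- of_int m) p))"
    by (rule eval4_eqI) (simp add: J algebra_simps)
  then show ?thesis by simp
qed

lemma is_submodule_Vsub: "is_submodule lam eta1 sig1 eta2 sig2 Vsub"
proof -
  have "act lam eta1 sig1 eta2 sig2 g u \<in> Vsub" if "u \<in> Vsub" for g u
    using that act_emb_mem_range_emb by (auto simp: Vsub_eq_range_emb)
  then show ?thesis
    using is_subspace_Vsub by (simp add: is_submodule_def)
qed

lemma vY_notin_Vsub: "vY \<notin> Vsub"
proof
  assume "vY \<in> Vsub"
  then obtain p where p: "vY = emb p"
    by (auto simp: Vsub_eq_range_emb)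
  have "eval4 vY 0 1 0 (-1) = eval4 vY 0 0 0 0"
    unfolding p by simp
  then show False by simp
qed

lemma one_mem_Vsub: "1 \<in> Vsub"
  using gen_mem_Vsub[of 0 0 0] by (simp add: gen_eq)

lemma act_H_diff_emb:
  assumes "lam \<noteq> 0"
  shows "C4 (1 / lam) * act lam eta1 sig1 eta2 sig2 (H 1) (emb p)
      - act lam eta1 sig1 eta2 sig2 (H 0) (emb p) = emb ((X3 + S3) * (pcompose p [:[:[:-1:]:], 1:] - p))"
proof -
  have "pcompose p [:[:[:-1:]:], 1:] = shU3 (-1) p"
    by (simp add: shU3_def)
  then show ?thesis
    by (intro eval4_eqI) (simp add: assms algebra_simps)
qed

lemma act_J_diff_emb:
  assumes "sig2 \<noteq> 0"
  shows "C4 (1 / sig2) * act lam eta1 sig1 eta2 sig2 (J 0) (emb [:q:]) - emb [:q:]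
    = emb [:pcompose q [:1, 1:] - q:]"
  by (rule eval4_eqI) (simp add: assms eval3_def poly_pcompose one_pCons add.commute)

lemma act_I_diff_emb:
  assumes "sig1 \<noteq> 0"
  shows "C4 (1 / sig1) * act lam eta1 sig1 eta2 sig2 (I 0) (emb [:[:r:]:]) - emb [:[:r:]:]
    = emb [:[:pcompose r [:-1, 1:] - r:]:]"
  by (rule eval4_eqI) (simp add: assms eval3_def poly_pcompose)

lemma act_L0: "act lam eta1 sig1 eta2 sig2 (L 0) F = (vY + vT) * F"
  by (rule eval4_eqI) (simp add: algebra_simps)

lemma submodule_descent_U:
  assumes W: "is_submodule lam eta1 sig1 eta2 sig2 W" and "lam \<noteq> 0"
    and "emb p \<in> W" "p \<noteq> 0"
  shows "\<exists>q. q \<noteq> 0 \<and> emb [:q:] \<in> W"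
proof (rule degree_descent[of "\<lambda>p. emb p \<in> W", OF assms(3,4)])
  fix q :: R3
  assume q: "emb q \<in> W" "q \<noteq> 0" "degree q > 0"
  let ?d = "pcompose q [:[:[:-1:]:], 1:] - q"
  have "(X3 + S3) * ?d = smult ([:[:0, 1:]:] + [:0, 1:]) ?d"
    by (simp add: X3_def S3_def)
  then have "(X3 + S3) * ?d \<noteq> 0" "degree ((X3 + S3) * ?d) < degree q"
    using shift_diff_lowers_degree[of "[:[:-1:]:]" q] q(3) by simp_all
  moreover have "emb ((X3 + S3) * ?d) \<in> W"
    using act_H_diff_emb[OF \<open>lam \<noteq> 0\<close>, of eta1 sig1 eta2 sig2 q] W q(1)
    by (metis is_submodule_act is_submodule_subspace is_subspace_diff is_subspace_smult)
  ultimately show "\<exists>q'. emb q' \<in> W \<and> q' \<noteq> 0 \<and> degree q' < degree q"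
    by blast
qed

lemma submodule_descent_S:
  assumes W: "is_submodule lam eta1 sig1 eta2 sig2 W" and "sig2 \<noteq> 0"
    and "emb [:q:] \<in> W" "q \<noteq> 0"
  shows "\<exists>r. r \<noteq> 0 \<and> emb [:[:r:]:] \<in> W"
proof (rule degree_descent[of "\<lambda>q. emb [:q:] \<in> W", OF assms(3,4)])
  fix q :: "complex poly poly"
  assume q: "emb [:q:] \<in> W" "q \<noteq> 0" "degree q > 0"
  let ?d = "pcompose q [:1, 1:] - q"
  have "emb [:?d:] \<in> W"
    using act_J_diff_emb[OF \<open>sig2 \<noteq> 0\<close>, of lam eta1 sig1 eta2 q] W q(1)
    by (metis is_submodule_act is_submodule_subspace is_subspace_diff is_subspace_smult)
  then show "\<exists>q'. emb [:q':] \<in> W \<and> q' \<noteq> 0 \<and> degree q' < degree q"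
    using shift_diff_lowers_degree[of 1 q] q(3) by auto
qed

lemma submodule_descent_X:
  assumes W: "is_submodule lam eta1 sig1 eta2 sig2 W" and "sig1 \<noteq> 0"
    and "emb [:[:r:]:] \<in> W" "r \<noteq> 0"
  shows "\<exists>a. a \<noteq> 0 \<and> emb [:[:[:a:]:]:] \<in> W"
proof (rule degree_descent[of "\<lambda>r. emb [:[:r:]:] \<in> W", OF assms(3,4)])
  fix r :: "complex poly"
  assume r: "emb [:[:r:]:] \<in> W" "r \<noteq> 0" "degree r > 0"
  let ?d = "pcompose r [:-1, 1:] - r"
  have "emb [:[:?d:]:] \<in> W"
    using act_I_diff_emb[OF \<open>sig1 \<noteq> 0\<close>, of lam eta1 eta2 sig2 r] W r(1)
    by (metis is_submodule_act is_submodule_subspace is_subspace_diff is_subspace_smult)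
  then show "\<exists>r'. emb [:[:r':]:] \<in> W \<and> r' \<noteq> 0 \<and> degree r' < degree r"
    using shift_diff_lowers_degree[of "-1" r] r(3) by auto
qed

lemma one_mem_nonzero_submodule:
  assumes W: "is_submodule lam eta1 sig1 eta2 sig2 W" and "W \<subseteq> Vsub" "W \<noteq> {0}"
    and "lam \<noteq> 0" "sig1 \<noteq> 0" "sig2 \<noteq> 0"
  shows "1 \<in> W"
proof -
  obtain F where "F \<in> W" "F \<noteq> 0"
    using assms(3) is_subspace_zero[OF is_submodule_subspace[OF W]] by blast
  moreover obtain p where "F = emb p"
    using \<open>F \<in> W\<close> assms(2) by (auto simp: Vsub_eq_range_emb)
  ultimately have "emb p \<in> W" "p \<noteq> 0"
    by auto
  then obtain q where "emb [:q:] \<in> W" "q \<noteq> 0"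
    using submodule_descent_U[OF W \<open>lam \<noteq> 0\<close>] by blast
  then obtain r where "emb [:[:r:]:] \<in> W" "r \<noteq> 0"
    using submodule_descent_S[OF W \<open>sig2 \<noteq> 0\<close>] by blast
  then obtain a where a: "emb [:[:[:a:]:]:] \<in> W" "a \<noteq> 0"
    using submodule_descent_X[OF W \<open>sig1 \<noteq> 0\<close>] by blast
  have "1 = C4 (1 / a) * emb [:[:[:a:]:]:]"
    by (rule eval4_eqI) (simp add: eval3_def \<open>a \<noteq> 0\<close>)
  then show ?thesis
    using is_subspace_smult[OF is_submodule_subspace[OF W] a(1)] by metis
qed

lemma Vsub_subset_submodule:
  assumes W: "is_submodule lam eta1 sig1 eta2 sig2 W" and "lam \<noteq> 0" and "1 \<in> W"
  shows "Vsub \<subseteq> W"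
proof -
  let ?act = "act lam eta1 sig1 eta2 sig2"
  have W_diff: "u \<in> W \<Longrightarrow> v \<in> W \<Longrightarrow> u - v \<in> W"
    and W_add: "u \<in> W \<Longrightarrow> v \<in> W \<Longrightarrow> u + v \<in> W"
    and W_smult: "u \<in> W \<Longrightarrow> C4 c * u \<in> W"
    and W_act: "u \<in> W \<Longrightarrow> ?act g u \<in> W" for u v c g
    using W by (simp_all add: is_submodule_act is_submodule_subspace is_subspace_diff
      is_subspace_add is_subspace_smult)
  have XS_mult: "vX * F \<in> W \<and> vS * F \<in> W" if "F \<in> W" "F = vX ^ a * vS ^ b" for F a b
  proof -
    \<comment> \<open>F does not involve Y and T, so H_0 multiplies it by X + S and ?A by S - X.\<close>
    let ?A = "C4 (1 / lam) * ?act (L 1) F - ?act (L 0) F - C4 (eta1 + eta2) * F"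
    have "vX * F = C4 (1/2) * (?act (H 0) F - ?A)" "vS * F = C4 (1/2) * (?act (H 0) F + ?A)"
      by (rule eval4_eqI, simp add: that(2) \<open>lam \<noteq> 0\<close> field_simps)+
    moreover have "C4 (1/2) * (?act (H 0) F - ?A) \<in> W" "C4 (1/2) * (?act (H 0) F + ?A) \<in> W"
      by (intro W_smult W_add W_diff W_act \<open>F \<in> W\<close>)+
    ultimately show ?thesis
      by (simp only:)
  qed
  have monomial: "vX ^ a * vS ^ b \<in> W" for a b
  proof (induction a)
    case 0
    show ?case
    proof (induction b)
      case (Suc b)
      then show ?case
        using XS_mult[of "vX ^ 0 * vS ^ b" 0 b] by simp
    qed (simp add: \<open>1 \<in> W\<close>)
  next
    case (Suc a)
    then show ?case
      using XS_mult[of "vX ^ a * vS ^ b" a b] by (simp add: mult_ac)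
  qed
  have "gen i j k \<in> W" for i j k
  proof (induction j)
    case (Suc j)
    have "gen i (Suc j) k = ?act (L 0) (gen i j k)"
      by (simp only: act_L0 gen_eq power_Suc mult_ac)
    then show ?case
      using W_act[OF Suc] by (simp only:)
  qed (simp add: gen_eq monomial)
  then show ?thesis
    using is_submodule_subspace[OF W] by (rule Vsub_minimal)
qed

theorem proposition3p3:
  fixes lam sig1 sig2 eta1 eta2 :: complex
  assumes "lam \<noteq> 0" and "sig1 \<noteq> 0" and "sig2 \<noteq> 0"
  shows "is_submodule lam eta1 sig1 eta2 sig2 Vsub \<and> Vsub \<noteq> {0} \<and> Vsub \<noteq> UNIV \<and>
         (\<forall>W. is_submodule lam eta1 sig1 eta2 sig2 W \<and> W \<subseteq> Vsub \<and> W \<noteq> {0} \<longrightarrow> W = Vsub)"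
proof (intro conjI allI impI)
  show "is_submodule lam eta1 sig1 eta2 sig2 Vsub"
    by (rule is_submodule_Vsub)
  show "Vsub \<noteq> {0}"
    using one_mem_Vsub by (metis singletonD zero_neq_one)
  show "Vsub \<noteq> UNIV"
    using vY_notin_Vsub by auto
  fix W
  assume W: "is_submodule lam eta1 sig1 eta2 sig2 W \<and> W \<subseteq> Vsub \<and> W \<noteq> {0}"
  then have "1 \<in> W"
    using one_mem_nonzero_submodule assms by blast
  then show "W = Vsub"
    using W Vsub_subset_submodule assms(1) by blast
qed

end
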